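(* Let $p$ be an odd prime, $m\geq 1$, $Q=T_{(p^m)}$ and $K=K_Q(p)$. An element $M\in K$ satisfies $M^p=\mathbbm{1}$ if either $M=S_\xi$ for some $S_\xi\in T_{(p)}$, or $M=S_\xi X^b$ with $S_\xi\in Q$ and $b\neq 0$.
   Context: Let $\{|q\rangle:q\in\mathbb{Z}_p\}$ be the computational basis of $\mathbb{C}^p$ and $X|q\rangle=|q+1\rangle$ the shift operator. For $\xi:\mathbb{Z}_p\to U(1)$ let $S_\xi=\mathrm{diag}(\xi(0),\dots,\xi(p-1))$. Let $T=\{S_\xi:\prod_{q\in\mathbb{Z}_p}\xi(q)=1\}$ (a maximal torus of $SU(p)$) and for $k\ge1$, $T_{(p^k)}=\{S\in T: S^{p^k}=\mathbbm{1}\}$. $K_Q(p)$ is the subgroup of $SU(p)$ generated by all $S_\xi X^b$ with $S_\xi\in Q$, $b\in\mathbb{Z}_p$. *)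

theory Defs
  imports "HOL-Analysis.Analysis" "Jordan_Normal_Form.Matrix"
begin

text \<open>Matrices on C^p with computational basis indexed by 0..p-1 (representing Z_p).\<close>

text \<open>Shift operator X |q> = |q+1 mod p>: entry (i,j) is 1 iff i = (j+1) mod p.\<close>
definition shift_mat :: "nat \<Rightarrow> complex mat" where
  "shift_mat p = mat p p (\<lambda>(i,j). if i = (j + 1) mod p then 1 else 0)"

definition S_mat :: "nat \<Rightarrow> (nat \<Rightarrow> complex) \<Rightarrow> complex mat" where
  "S_mat p xi = mat p p (\<lambda>(i,j). if i = j then xi i else 0)"

definition torus :: "nat \<Rightarrow> complex mat set" where
  "torus p = {S_mat p xi | xi. (\<forall>q<p. cmod (xi q) = 1) \<and> (\<Prod>q<p. xi q) = 1}"

definition torus_pow :: "nat \<Rightarrow> nat \<Rightarrow> complex mat set" where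
  "torus_pow p k = {S \<in> torus p. S ^\<^sub>m (p ^ k) = 1\<^sub>m p}"

text \<open>Conjugate transpose (the group inverse in SU(p)).\<close>
definition adj_mat :: "complex mat \<Rightarrow> complex mat" where
  "adj_mat M = mat (dim_col M) (dim_row M) (\<lambda>(i,j). cnj (M $$ (j,i)))"

inductive_set gen_subgroup :: "nat \<Rightarrow> complex mat set \<Rightarrow> complex mat set"
  for p :: nat and G :: "complex mat set" where
  gen_one: "1\<^sub>m p \<in> gen_subgroup p G"
| gen_base: "g \<in> G \<Longrightarrow> g \<in> gen_subgroup p G"
| gen_mult: "a \<in> gen_subgroup p G \<Longrightarrow> b \<in> gen_subgroup p G \<Longrightarrow> a * b \<in> gen_subgroup p G"
| gen_inv: "a \<in> gen_subgroup p G \<Longrightarrow> adj_mat a \<in> gen_subgroup p G"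

definition K_Q :: "complex mat set \<Rightarrow> nat \<Rightarrow> complex mat set" where
  "K_Q Q p = gen_subgroup p {S * (shift_mat p ^\<^sub>m b) | S b. S \<in> Q \<and> b < p}"

end

theory Submission
  imports Defs "HOL-Number_Theory.Cong"
begin

text \<open>
  Both \<open>S\<^sub>\<xi>\<close> and \<open>X\<close> are weighted shifts \<open>|q\<rangle> \<mapsto> w(q) |q + a\<rangle>\<close>, and weighted shifts
  multiply by adding the shifts and transporting the weights. Hence \<open>(S\<^sub>\<xi> X\<^sup>b)\<^sup>p\<close> is the
  weighted shift by \<open>p b \<equiv> 0\<close> whose weight at \<open>q\<close> is the product of the weights along the
  orbit \<open>q, q + b, \<dots>, q + (p - 1) b\<close>. For \<open>b\<close> prime to \<open>p\<close> this orbit is all of \<open>\<int>\<^sub>p\<close>,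
  so \<open>(S\<^sub>\<xi> X\<^sup>b)\<^sup>p\<close> is the scalar \<open>\<Prod>\<^sub>q \<xi>(q) = 1\<close>. For \<open>M \<in> T\<^sub>(\<^sub>p\<^sub>)\<close> the claim is the
  definition of \<open>T\<^sub>(\<^sub>p\<^sub>)\<close>.
\<close>

definition weighted_shift_mat :: "nat \<Rightarrow> nat \<Rightarrow> (nat \<Rightarrow> complex) \<Rightarrow> complex mat" where
  "weighted_shift_mat p a w = mat p p (\<lambda>(i, j). if i = (j + a) mod p then w j else 0)"

lemma weighted_shift_mat_carrier [simp]:
  "dim_row (weighted_shift_mat p a w) = p" "dim_col (weighted_shift_mat p a w) = p"
  by (simp_all add: weighted_shift_mat_def)

lemma weighted_shift_mat_mult:
  "weighted_shift_mat p a v * weighted_shift_mat p b w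
     = weighted_shift_mat p (a + b) (\<lambda>j. w j * v ((j + b) mod p))"
proof (rule eq_matI)
  fix i j assume "i < dim_row (weighted_shift_mat p (a + b) (\<lambda>j. w j * v ((j + b) mod p)))"
    and "j < dim_col (weighted_shift_mat p (a + b) (\<lambda>j. w j * v ((j + b) mod p)))"
  then have i: "i < p" and j: "j < p" by simp_all
  have shift: "((j + b) mod p + a) mod p = (j + (a + b)) mod p"
    unfolding mod_add_left_eq by (simp add: ac_simps)
  have "(weighted_shift_mat p a v * weighted_shift_mat p b w) $$ (i, j)
      = (\<Sum>l<p. (if i = (l + a) mod p then v l else 0) * (if l = (j + b) mod p then w j else 0))"
    using i j by (simp add: weighted_shift_mat_def scalar_prod_def lessThan_atLeast0)
  also have "\<dots> = (\<Sum>l<p. if l = (j + b) mod p then (if i = (l + a) mod p then v l else 0) * w j else 0)"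
    by (rule sum.cong) auto
  also have "\<dots> = (if i = ((j + b) mod p + a) mod p then v ((j + b) mod p) else 0) * w j"
    using j by simp
  also have "\<dots> = weighted_shift_mat p (a + b) (\<lambda>j. w j * v ((j + b) mod p)) $$ (i, j)"
    using i j shift by (simp add: weighted_shift_mat_def)
  finally show "(weighted_shift_mat p a v * weighted_shift_mat p b w) $$ (i, j)
      = weighted_shift_mat p (a + b) (\<lambda>j. w j * v ((j + b) mod p)) $$ (i, j)" .
qed simp_all

lemma one_mat_eq_weighted_shift_mat: "1\<^sub>m p = weighted_shift_mat p 0 (\<lambda>_. 1)"
  by (rule eq_matI) (auto simp: weighted_shift_mat_def)

lemma smult_one_mat_eq_weighted_shift_mat: "c \<cdot>\<^sub>m 1\<^sub>m p = weighted_shift_mat p 0 (\<lambda>_. c)"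
  by (rule eq_matI) (auto simp: weighted_shift_mat_def)

lemma shift_mat_eq_weighted_shift_mat: "shift_mat p = weighted_shift_mat p 1 (\<lambda>_. 1)"
  by (simp add: shift_mat_def weighted_shift_mat_def)

lemma S_mat_eq_weighted_shift_mat: "S_mat p \<xi> = weighted_shift_mat p 0 \<xi>"
  by (rule eq_matI) (auto simp: S_mat_def weighted_shift_mat_def)

lemma weighted_shift_mat_cong:
  "(\<And>j. j < p \<Longrightarrow> v j = w j) \<Longrightarrow> weighted_shift_mat p a v = weighted_shift_mat p a w"
  by (rule eq_matI) (auto simp: weighted_shift_mat_def)

lemma weighted_shift_mat_mod: "weighted_shift_mat p (a mod p) w = weighted_shift_mat p a w"
  by (simp add: weighted_shift_mat_def mod_add_right_eq)

lemma weighted_shift_mat_pow: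
  "weighted_shift_mat p a w ^\<^sub>m n = weighted_shift_mat p (n * a) (\<lambda>j. \<Prod>k<n. w ((j + k * a) mod p))"
proof (induction n)
  case 0
  show ?case by (simp add: one_mat_eq_weighted_shift_mat)
next
  case (Suc n)
  have "w j * (\<Prod>k<n. w (((j + a) mod p + k * a) mod p)) = (\<Prod>k<Suc n. w ((j + k * a) mod p))"
    if "j < p" for j
  proof -
    have "(\<Prod>k<Suc n. w ((j + k * a) mod p)) = w (j mod p) * (\<Prod>k<n. w ((j + Suc k * a) mod p))"
      by (subst prod.lessThan_Suc_shift) simp
    also have "(\<Prod>k<n. w ((j + Suc k * a) mod p)) = (\<Prod>k<n. w (((j + a) mod p + k * a) mod p))"
      by (simp add: mod_add_left_eq add.assoc)
    finally show ?thesis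
      using that by simp
  qed
  then have "weighted_shift_mat p (Suc n * a)
        (\<lambda>j. w j * (\<Prod>k<n. w (((j + a) mod p + k * a) mod p)))
      = weighted_shift_mat p (Suc n * a) (\<lambda>j. \<Prod>k<Suc n. w ((j + k * a) mod p))"
    by (rule weighted_shift_mat_cong)
  then show ?case
    by (simp only: pow_mat.simps Suc weighted_shift_mat_mult mult_Suc add.commute[of "n * a"])
qed

lemma S_mat_mult_shift_mat_pow:
  "S_mat p \<xi> * shift_mat p ^\<^sub>m b = weighted_shift_mat p b (\<lambda>j. \<xi> ((j + b) mod p))"
  by (simp add: S_mat_eq_weighted_shift_mat shift_mat_eq_weighted_shift_mat
      weighted_shift_mat_pow weighted_shift_mat_mult)

lemma bij_betw_affine_mod:
  fixes p b c :: nat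
  assumes "coprime b p"
  shows "bij_betw (\<lambda>k. (c + k * b) mod p) {..<p} {..<p}"
proof -
  have inj: "inj_on (\<lambda>k. (c + k * b) mod p) {..<p}"
  proof (rule inj_onI)
    fix x y assume "x \<in> {..<p}" "y \<in> {..<p}" "(c + x * b) mod p = (c + y * b) mod p"
    then show "x = y"
      using assms by (metis cong_def cong_add_lcancel_nat cong_mult_rcancel_nat
          cong_less_modulus_unique_nat lessThan_iff)
  qed
  moreover have "(\<lambda>k. (c + k * b) mod p) ` {..<p} = {..<p}"
    by (rule endo_inj_surj) (use inj in auto)
  ultimately show ?thesis
    by (simp add: bij_betw_def)
qed

lemma prod_affine_mod:
  fixes p b c :: nat
  assumes "coprime b p"
  shows "(\<Prod>k<p. f ((c + k * b) mod p)) = (\<Prod>q<p. f q)"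
  using prod.reindex_bij_betw[OF bij_betw_affine_mod[OF assms]] .

lemma weighted_shift_mat_pow_scalar:
  assumes "coprime a p"
  shows "weighted_shift_mat p a w ^\<^sub>m p = (\<Prod>q<p. w q) \<cdot>\<^sub>m 1\<^sub>m p"
proof -
  have "weighted_shift_mat p a w ^\<^sub>m p = weighted_shift_mat p (p * a) (\<lambda>_. \<Prod>q<p. w q)"
    using assms by (simp add: weighted_shift_mat_pow prod_affine_mod)
  also have "\<dots> = weighted_shift_mat p 0 (\<lambda>_. \<Prod>q<p. w q)"
    by (metis mod_mult_self1_is_0 weighted_shift_mat_mod)
  finally show ?thesis
    by (simp add: smult_one_mat_eq_weighted_shift_mat)
qed

theorem lemma2:
  fixes p m :: nat and M :: "complex mat"
  assumes "prime p" and "odd p" and "m \<ge> 1"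
    and "M \<in> K_Q (torus_pow p m) p"
    and "M \<in> torus_pow p 1 \<or>
         (\<exists>S b. S \<in> torus_pow p m \<and> 0 < b \<and> b < p \<and> M = S * (shift_mat p ^\<^sub>m b))"
  shows "M ^\<^sub>m p = 1\<^sub>m p"
  using assms(5)
proof
  assume "M \<in> torus_pow p 1"
  then show ?thesis by (simp add: torus_pow_def)
next
  assume "\<exists>S b. S \<in> torus_pow p m \<and> 0 < b \<and> b < p \<and> M = S * (shift_mat p ^\<^sub>m b)"
  then obtain \<xi> b where M: "M = S_mat p \<xi> * shift_mat p ^\<^sub>m b" and "0 < b" "b < p"
    and det: "(\<Prod>q<p. \<xi> q) = 1"
    by (auto simp: torus_pow_def torus_def)
  then have "coprime b p"
    using \<open>prime p\<close> by (metis coprime_commute nat_dvd_not_less prime_imp_coprime_nat)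
  moreover have "(\<Prod>j<p. \<xi> ((j + b) mod p)) = 1"
    using prod_affine_mod[where b = 1 and c = b and f = \<xi>] det by (simp add: add.commute)
  ultimately have "M ^\<^sub>m p = 1 \<cdot>\<^sub>m 1\<^sub>m p"
    by (simp add: M S_mat_mult_shift_mat_pow weighted_shift_mat_pow_scalar)
  then show ?thesis
    by (simp add: smult_one_mat_eq_weighted_shift_mat flip: one_mat_eq_weighted_shift_mat)
qed

end
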